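(* For any planar graph $G$, if $\mathcal{B}=\{N[v]\mid v\in V(G)\}$, then NCTD$^+(\mathcal{B})\le 7$.
   Context: $N[v]$ is the closed neighborhood of $v$. A positive teaching map for $\mathcal{B}$ assigns to each $B\in\mathcal{B}$ a set $T(B)\subseteq B$. A vertex $w$ distinguishes $B,B'$ if $w$ lies in exactly one of them. $T$ is non-clashing if for all distinct $B,B'\in\mathcal{B}$ some $w\in T(B)\cup T(B')$ distinguishes them; its size is $\max_{B\in\mathcal{B}}|T(B)|$. NCTD$^+(\mathcal{B})$ is the minimum size of a positive non-clashing teaching map for $\mathcal{B}$. *)

theory Defs
  imports "HOL-Analysis.Analysis"
begin

definition simple_graph :: "'a set \<Rightarrow> 'a set set \<Rightarrow> bool" where
  "simple_graph V E \<longleftrightarrow> finite V \<and>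
     (\<forall>e\<in>E. \<exists>u v. u \<in> V \<and> v \<in> V \<and> u \<noteq> v \<and> e = {u, v})"

definition planar_graph :: "'a set \<Rightarrow> 'a set set \<Rightarrow> bool" where
  "planar_graph V E \<longleftrightarrow> simple_graph V E \<and>
     (\<exists>(p :: 'a \<Rightarrow> complex) (\<gamma> :: 'a set \<Rightarrow> real \<Rightarrow> complex).
        inj_on p V \<and>
        (\<forall>e\<in>E. arc (\<gamma> e) \<and>
           (\<exists>u v. e = {u, v} \<and> pathstart (\<gamma> e) = p u \<and> pathfinish (\<gamma> e) = p v) \<and>
           path_image (\<gamma> e) \<inter> p ` V \<subseteq> p ` e) \<and>
        (\<forall>e\<in>E. \<forall>f\<in>E. e \<noteq> f \<longrightarrow> path_image (\<gamma> e) \<inter> path_image (\<gamma> f) \<subseteq> p ` (e \<inter> f)))"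

definition closed_nbhd :: "'a set set \<Rightarrow> 'a \<Rightarrow> 'a set" where
  "closed_nbhd E v = insert v {u. {u, v} \<in> E}"

definition positive_teaching_map :: "'a set set \<Rightarrow> ('a set \<Rightarrow> 'a set) \<Rightarrow> bool" where
  "positive_teaching_map \<B> T \<longleftrightarrow> (\<forall>B\<in>\<B>. T B \<subseteq> B)"

definition distinguishes :: "'a \<Rightarrow> 'a set \<Rightarrow> 'a set \<Rightarrow> bool" where
  "distinguishes w B B' \<longleftrightarrow> (w \<in> B) \<noteq> (w \<in> B')"

definition non_clashing :: "'a set set \<Rightarrow> ('a set \<Rightarrow> 'a set) \<Rightarrow> bool" where
  "non_clashing \<B> T \<longleftrightarrow>
     (\<forall>B\<in>\<B>. \<forall>B'\<in>\<B>. B \<noteq> B' \<longrightarrow> (\<exists>w \<in> T B \<union> T B'. distinguishes w B B'))"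

definition NCTD_pos :: "'a set set \<Rightarrow> nat" where
  "NCTD_pos \<B> = (LEAST k. \<exists>T. positive_teaching_map \<B> T \<and> non_clashing \<B> T \<and>
                            (\<forall>B\<in>\<B>. card (T B) \<le> k))"

end

theory Submission
  imports Defs
begin

(* Planar graphs contain no K_{3,3}, and in a K_{3,3}-free graph every closed neighbourhood N[v]
   contains a set S of at most 7 vertices such that every closed neighbourhood containing S
   contains N[v]. Taking such an S as teaching set of N[v] gives a non-clashing map, since of two
   distinct neighbourhoods one is not contained in the other.
   To build S, start from v, add some w1 in N[v] - N[u1] for a neighbour u1 with N[v] not inside
   N[u1], and then some w2 in N[v] - N[u2] for such a neighbour u2 whose neighbourhood contains w1.
   Apart from w1 and w2, at most two neighbours u with {v, w1, w2} in N[u] are left whose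
   neighbourhood misses a vertex of N[v]: three of them would span a K_{3,3} with v, w1, w2. One
   missing vertex for each of these at most four u completes S.
   For K_{3,3} with sides {a1, a2, a3} and {b1, b2, b3}, the three paths a1 bi a2 form a theta curve.
   The Jordan curve theorem, Janiszewski's theorem and the theta-curve theorem show that no point
   off a theta curve can be joined to all three arcs by curves each avoiding the other two arcs, but
   the edges at a3 are such curves. *)

section \<open>Teaching closed neighbourhoods of graphs without K_{3,3}\<close>

definition K33_subgraph :: "'a set set \<Rightarrow> 'a set \<Rightarrow> 'a set \<Rightarrow> bool" where
  "K33_subgraph E A B \<longleftrightarrow> card A = 3 \<and> card B = 3 \<and> A \<inter> B = {} \<and> (\<forall>a\<in>A. \<forall>b\<in>B. {a, b} \<in> E)"

lemma subset_pair_if_no_three_distinct: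
  assumes "\<And>x y z. x \<in> A \<Longrightarrow> y \<in> A \<Longrightarrow> z \<in> A \<Longrightarrow> x \<noteq> y \<Longrightarrow> x \<noteq> z \<Longrightarrow> y \<noteq> z \<Longrightarrow> False"
  obtains x y where "A \<subseteq> {x, y}"
  using assms by (metis insert_subset subsetI insertCI)

lemma closed_nbhd_sym: "u \<in> closed_nbhd E v \<longleftrightarrow> v \<in> closed_nbhd E u"
  by (auto simp: closed_nbhd_def insert_commute)

lemma mem_closed_nbhd_self: "v \<in> closed_nbhd E v"
  by (simp add: closed_nbhd_def)

definition unseparated :: "'a set set \<Rightarrow> 'a \<Rightarrow> 'a set \<Rightarrow> 'a set" where
  "unseparated E v W =
     {u \<in> closed_nbhd E v. W \<subseteq> closed_nbhd E u \<and> \<not> closed_nbhd E v \<subseteq> closed_nbhd E u}"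

lemma unseparated_pair_subset:
  assumes no_K33: "\<And>A B. \<not> K33_subgraph E A B"
    and w: "w1 \<in> closed_nbhd E v" "w2 \<in> closed_nbhd E v" "distinct [v, w1, w2]"
  obtains x y where "unseparated E v {w1, w2} \<subseteq> {w1, w2, x, y}"
proof -
  let ?U = "unseparated E v {w1, w2} - {w1, w2}"
  have U: "u \<notin> {v, w1, w2}" "\<forall>b\<in>{v, w1, w2}. {u, b} \<in> E" if "u \<in> ?U" for u
    using that by (auto simp: unseparated_def closed_nbhd_def insert_commute)
  have "False" if "x \<in> ?U" "y \<in> ?U" "z \<in> ?U" "x \<noteq> y" "x \<noteq> z" "y \<noteq> z" for x y z
  proof -
    have "K33_subgraph E {x, y, z} {v, w1, w2}"
      unfolding K33_subgraph_def
      using that w(3) U[OF that(1)] U[OF that(2)] U[OF that(3)] by auto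
    then show False
      using no_K33 by blast
  qed
  then obtain x y where "?U \<subseteq> {x, y}"
    by (rule subset_pair_if_no_three_distinct) blast
  then show thesis
    using that[of x y] by blast
qed

lemma exists_small_separator:
  assumes no_K33: "\<And>A B. \<not> K33_subgraph E A B"
  obtains W where "W \<subseteq> closed_nbhd E v" "finite W" "card W \<le> 2"
    "finite (unseparated E v W)" "card (unseparated E v W) \<le> 4"
proof (cases "unseparated E v {} = {}")
  case True
  then show thesis
    using that[of "{}"] by simp
next
  case False
  then obtain u1 w1 where u1: "u1 \<in> closed_nbhd E v"
    and w1: "w1 \<in> closed_nbhd E v" "w1 \<notin> closed_nbhd E u1"
    by (auto simp: unseparated_def)
  show thesis
  proof (cases "unseparated E v {w1} = {}")
    case True
    then show thesis
      using that[of "{w1}"] w1 by simp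
  next
    case False
    then obtain u2 w2 where u2: "w1 \<in> closed_nbhd E u2" "u2 \<in> closed_nbhd E v"
      and w2: "w2 \<in> closed_nbhd E v" "w2 \<notin> closed_nbhd E u2"
      by (auto simp: unseparated_def)
    then have "distinct [v, w1, w2]"
      using u1 u2 w1 w2 closed_nbhd_sym by fastforce
    then obtain x y where xy: "unseparated E v {w1, w2} \<subseteq> {w1, w2, x, y}"
      using unseparated_pair_subset[OF no_K33 w1(1) w2(1)] by blast
    then have "finite (unseparated E v {w1, w2})" "card (unseparated E v {w1, w2}) \<le> 4"
      using finite_subset card_mono[OF _ xy] by (auto simp: card_insert_if intro: order_trans)
    then show thesis
      using that[of "{w1, w2}"] w1 w2 by (simp add: card_insert_if)
  qed
qed

lemma closed_nbhd_teaching_set: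
  assumes no_K33: "\<And>A B. \<not> K33_subgraph E A B"
  shows "\<exists>S\<subseteq>closed_nbhd E v. card S \<le> 7 \<and>
    (\<forall>u. S \<subseteq> closed_nbhd E u \<longrightarrow> closed_nbhd E v \<subseteq> closed_nbhd E u)"
proof -
  let ?N = "closed_nbhd E"
  obtain W where W: "W \<subseteq> ?N v" "finite W" "card W \<le> 2"
    and U: "finite (unseparated E v W)" "card (unseparated E v W) \<le> 4"
    using exists_small_separator[OF no_K33] by blast
  have "\<forall>u\<in>unseparated E v W. \<exists>w. w \<in> ?N v \<and> w \<notin> ?N u"
    by (auto simp: unseparated_def)
  then obtain f where f: "\<And>u. u \<in> unseparated E v W \<Longrightarrow> f u \<in> ?N v \<and> f u \<notin> ?N u"
    by metis
  define S where "S = insert v (W \<union> f ` unseparated E v W)"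
  have "S \<subseteq> ?N v"
    using W(1) f mem_closed_nbhd_self by (auto simp: S_def)
  moreover have "card S \<le> 7"
  proof -
    have "card S \<le> Suc (card (W \<union> f ` unseparated E v W))"
      unfolding S_def using W(2) U(1) by (simp add: card_insert_if)
    also have "\<dots> \<le> Suc (card W + card (f ` unseparated E v W))"
      using card_Un_le by simp
    also have "\<dots> \<le> 7"
      using W(3) U(2) card_image_le[OF U(1), of f] by simp
    finally show ?thesis .
  qed
  moreover have "?N v \<subseteq> ?N u" if "S \<subseteq> ?N u" for u
  proof (rule ccontr)
    assume "\<not> ?N v \<subseteq> ?N u"
    moreover have "u \<in> ?N v"
      using that closed_nbhd_sym by (fastforce simp: S_def)
    ultimately have "u \<in> unseparated E v W"
      using that by (auto simp: unseparated_def S_def)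
    then show False
      using f that by (auto simp: S_def)
  qed
  ultimately show ?thesis
    by blast
qed

lemma non_clashing_if_least_superset:
  assumes "\<And>B. B \<in> \<B> \<Longrightarrow> T B \<subseteq> B"
    and "\<And>B B'. B \<in> \<B> \<Longrightarrow> B' \<in> \<B> \<Longrightarrow> T B \<subseteq> B' \<Longrightarrow> B \<subseteq> B'"
  shows "non_clashing \<B> T"
  unfolding non_clashing_def distinguishes_def
proof (intro ballI impI)
  fix B B' assume "B \<in> \<B>" "B' \<in> \<B>" "B \<noteq> B'"
  then have "\<not> T B \<subseteq> B' \<or> \<not> T B' \<subseteq> B"
    using assms(2) by blast
  then show "\<exists>w\<in>T B \<union> T B'. (w \<in> B) \<noteq> (w \<in> B')"
    using assms(1) \<open>B \<in> \<B>\<close> \<open>B' \<in> \<B>\<close> by blast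
qed

lemma NCTD_pos_le:
  assumes "positive_teaching_map \<B> T" "non_clashing \<B> T" "\<And>B. B \<in> \<B> \<Longrightarrow> card (T B) \<le> k"
  shows "NCTD_pos \<B> \<le> k"
  unfolding NCTD_pos_def by (rule Least_le) (use assms in blast)

lemma NCTD_pos_closed_nbhds_le_7:
  assumes no_K33: "\<And>A B. \<not> K33_subgraph E A B"
  shows "NCTD_pos (closed_nbhd E ` V) \<le> 7"
proof -
  let ?\<B> = "closed_nbhd E ` V"
  have "\<exists>S. S \<subseteq> B \<and> card S \<le> 7 \<and> (\<forall>B'\<in>?\<B>. S \<subseteq> B' \<longrightarrow> B \<subseteq> B')" if B: "B \<in> ?\<B>" for B
  proof -
    obtain v where "B = closed_nbhd E v"
      using B by blast
    then show ?thesis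
      using closed_nbhd_teaching_set[OF no_K33, of v] by blast
  qed
  then obtain T where T: "\<And>B. B \<in> ?\<B> \<Longrightarrow> T B \<subseteq> B \<and> card (T B) \<le> 7 \<and>
      (\<forall>B'\<in>?\<B>. T B \<subseteq> B' \<longrightarrow> B \<subseteq> B')"
    by metis
  show ?thesis
  proof (rule NCTD_pos_le)
    show "positive_teaching_map ?\<B> T"
      using T by (simp add: positive_teaching_map_def)
    show "non_clashing ?\<B> T"
      using T by (intro non_clashing_if_least_superset) blast+
  qed (use T in blast)
qed

section \<open>Theta curves\<close>

definition theta_curve ::
    "complex \<Rightarrow> complex \<Rightarrow> (real \<Rightarrow> complex) \<Rightarrow> (real \<Rightarrow> complex) \<Rightarrow> (real \<Rightarrow> complex) \<Rightarrow> bool"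
  where "theta_curve a b c1 c2 c3 \<longleftrightarrow>
     (\<forall>c\<in>{c1, c2, c3}. arc c \<and> pathstart c = a \<and> pathfinish c = b) \<and>
     path_image c1 \<inter> path_image c2 = {a, b} \<and> path_image c1 \<inter> path_image c3 = {a, b} \<and>
     path_image c2 \<inter> path_image c3 = {a, b}"

lemma theta_curve_swap12: "theta_curve a b c1 c2 c3 \<Longrightarrow> theta_curve a b c2 c1 c3"
  and theta_curve_swap23: "theta_curve a b c1 c2 c3 \<Longrightarrow> theta_curve a b c1 c3 c2"
  by (auto simp: theta_curve_def Int_commute)

lemma Jordan_two_arcs:
  fixes c1 c2 :: "real \<Rightarrow> complex"
  assumes "arc c1" "pathstart c1 = a" "pathfinish c1 = b"
    and "arc c2" "pathstart c2 = a" "pathfinish c2 = b"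
    and "path_image c1 \<inter> path_image c2 = {a, b}"
  defines "C \<equiv> path_image c1 \<union> path_image c2"
  shows "inside C \<noteq> {}" "connected (inside C)" "frontier (inside C) = C"
proof -
  have "simple_path (c1 +++ reversepath c2)"
    using assms by (auto intro!: simple_path_join_loop arc_reversepath)
  moreover have "path_image (c1 +++ reversepath c2) = C"
    using assms by (simp add: path_image_join)
  ultimately show "inside C \<noteq> {}" "connected (inside C)" "frontier (inside C) = C"
    using Jordan_inside_outside[of "c1 +++ reversepath c2"] assms by auto
qed

lemma theta_curve_Jordan:
  assumes "theta_curve a b c1 c2 c3"
  defines "C \<equiv> path_image c1 \<union> path_image c2"
  shows "inside C \<noteq> {}" "connected (inside C)" "frontier (inside C) = C"
  using assms Jordan_two_arcs[of c1 a b c2] by (auto simp: theta_curve_def)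

lemma outside_Un_eq_Int_outside:
  fixes S T :: "complex set"
  assumes "compact S" "compact T" "connected (S \<inter> T)"
  shows "outside (S \<union> T) = outside S \<inter> outside T"
proof
  show "outside (S \<union> T) \<subseteq> outside S \<inter> outside T"
    by (simp add: outside_mono)
next
  show "outside S \<inter> outside T \<subseteq> outside (S \<union> T)"
  proof
    fix x assume x: "x \<in> outside S \<inter> outside T"
    have "bounded (- outside S \<union> - outside T \<union> - outside (S \<union> T))"
      using assms by (simp add: cobounded_outside compact_imp_bounded)
    then obtain z where z: "z \<in> outside S" "z \<in> outside T" "z \<in> outside (S \<union> T)"
      using not_bounded_UNIV bounded_subset by blast
    have "connected_component (- U) x z" if "U \<in> {S, T}" for U
    proof (rule connected_componentI)
      show "connected (outside U)"
        using assms that by (auto intro: connected_outside compact_imp_bounded)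
    qed (use x z that in \<open>auto simp: outside_def\<close>)
    then have "connected_component (- (S \<union> T)) x z"
      using Janiszewski[OF \<open>compact S\<close> compact_imp_closed[OF \<open>compact T\<close>] \<open>connected (S \<inter> T)\<close>]
      by blast
    then show "x \<in> outside (S \<union> T)"
      using z(3) outside_same_component connected_component_sym by blast
  qed
qed

lemma inside_if_connected_disjoint:
  assumes "connected D" "D \<inter> S = {}" "x \<in> D" "y \<in> D" "x \<in> inside S"
  shows "y \<in> inside S"
  using assms by (meson connected_componentI disjoint_eq_subset_Compl inside_same_component)

lemma theta_curve_inside_subset_outside:
  assumes th: "theta_curve a b c1 c2 c3"
    and "path_image c3 \<inter> inside (path_image c1 \<union> path_image c2) = {}"
    and "path_image c2 \<inter> inside (path_image c1 \<union> path_image c3) = {}"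
  shows "inside (path_image c1 \<union> path_image c2) \<subseteq> outside (path_image c1 \<union> path_image c3)"
proof
  let ?C12 = "path_image c1 \<union> path_image c2" and ?C13 = "path_image c1 \<union> path_image c3"
  have arcs: "arc c1" "arc c2" "arc c3" and ends: "pathstart c2 = a" "pathfinish c2 = b"
    using th by (auto simp: theta_curve_def)
  note J12 = theta_curve_Jordan[OF th]
  have disj: "inside ?C12 \<inter> ?C13 = {}"
    using assms(2) inside_no_overlap[of ?C12] by blast
  fix y assume y: "y \<in> inside ?C12"
  show "y \<in> outside ?C13"
  proof (rule ccontr)
    assume "y \<notin> outside ?C13"
    then have "y \<in> inside ?C13"
      using y disj inside_Un_outside[of ?C13] by blast
    then have "inside ?C12 \<subseteq> inside ?C13"
      using inside_if_connected_disjoint[OF J12(2) disj y] th by (auto simp: theta_curve_def)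
    then have "closure (inside ?C12) \<subseteq> closure (inside ?C13)"
      by (rule closure_mono)
    also have "\<dots> \<subseteq> ?C13 \<union> inside ?C13"
      using arcs by (intro closure_inside_subset closed_Un closed_path_image arc_imp_path)
    finally have "frontier (inside ?C12) \<subseteq> ?C13 \<union> inside ?C13"
      using closure_Un_frontier by blast
    then have "path_image c2 \<subseteq> {a, b}"
      using J12(3) th assms(3) by (auto simp: theta_curve_def)
    then show False
      using nonempty_simple_path_endless[OF arc_imp_simple_path[OF arcs(2)]] ends by blast
  qed
qed

lemma theta_curve_arc_meets_inside:
  assumes th: "theta_curve a b c1 c2 c3"
  shows "path_image c3 \<inter> inside (path_image c1 \<union> path_image c2) \<noteq> {} \<or>
         path_image c2 \<inter> inside (path_image c1 \<union> path_image c3) \<noteq> {} \<or>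
         path_image c1 \<inter> inside (path_image c2 \<union> path_image c3) \<noteq> {}"
proof (rule ccontr)
  let ?C12 = "path_image c1 \<union> path_image c2" and ?C13 = "path_image c1 \<union> path_image c3"
    and ?C23 = "path_image c2 \<union> path_image c3"
  assume "\<not> ?thesis"
  then have "inside ?C12 \<subseteq> outside ?C13" "inside ?C12 \<subseteq> outside ?C23"
    using theta_curve_inside_subset_outside[OF th]
      theta_curve_inside_subset_outside[OF theta_curve_swap12[OF th]]
    by (simp_all add: Un_commute)
  moreover have "outside ?C13 \<inter> outside ?C23 = outside (?C13 \<union> ?C23)"
  proof (rule outside_Un_eq_Int_outside[symmetric])
    show "compact ?C13" "compact ?C23"
      using th by (auto simp: theta_curve_def intro!: compact_path_image arc_imp_path)
    have "?C13 \<inter> ?C23 = path_image c3"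
      using th by (auto simp: theta_curve_def)
    then show "connected (?C13 \<inter> ?C23)"
      using th by (auto simp: theta_curve_def intro!: connected_path_image arc_imp_path)
  qed
  moreover have "outside (?C13 \<union> ?C23) \<subseteq> outside ?C12"
    by (rule outside_mono) blast
  ultimately have "inside ?C12 = {}"
    using inside_Int_outside[of ?C12] by blast
  then show False
    using theta_curve_Jordan(1)[OF th] by blast
qed

lemma theta_curve_arc_inside:
  assumes th: "theta_curve a b c1 c2 c3"
    and "path_image c3 \<inter> inside (path_image c1 \<union> path_image c2) \<noteq> {}"
  shows "path_image c3 - {a, b} \<subseteq> inside (path_image c1 \<union> path_image c2)"
proof
  let ?C12 = "path_image c1 \<union> path_image c2"
  have arc: "arc c3" and ends: "pathstart c3 = a" "pathfinish c3 = b"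
    using th by (auto simp: theta_curve_def)
  obtain q where q: "q \<in> path_image c3" "q \<in> inside ?C12"
    using assms(2) by blast
  have "a \<in> ?C12" "b \<in> ?C12"
    using th by (auto simp: theta_curve_def)
  then have "q \<in> path_image c3 - {a, b}"
    using q inside_no_overlap[of ?C12] by blast
  moreover have "connected (path_image c3 - {a, b})"
    using connected_simple_path_endless[OF arc_imp_simple_path[OF arc]] ends by simp
  moreover have "(path_image c3 - {a, b}) \<inter> ?C12 = {}"
    using th by (auto simp: theta_curve_def)
  ultimately show "m \<in> inside ?C12" if "m \<in> path_image c3 - {a, b}" for m
    using inside_if_connected_disjoint q(2) that by blast
qed

lemma theta_curve_no_point_joined_to_all_arcs_inside:
  assumes th: "theta_curve a b c1 c2 c3"
    and x: "x \<notin> path_image c1 \<union> path_image c2 \<union> path_image c3"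
    and D1: "connected D1" "x \<in> D1" "D1 \<inter> path_image c1 \<noteq> {}"
      "D1 \<inter> (path_image c2 \<union> path_image c3) = {}"
    and D2: "connected D2" "x \<in> D2" "D2 \<inter> path_image c2 \<noteq> {}"
      "D2 \<inter> (path_image c1 \<union> path_image c3) = {}"
    and D3: "connected D3" "x \<in> D3" "D3 \<inter> path_image c3 \<noteq> {}"
      "D3 \<inter> (path_image c1 \<union> path_image c2) = {}"
    and in3: "path_image c3 \<inter> inside (path_image c1 \<union> path_image c2) \<noteq> {}"
  shows False
proof -
  let ?C12 = "path_image c1 \<union> path_image c2" and ?C13 = "path_image c1 \<union> path_image c3"
    and ?C23 = "path_image c2 \<union> path_image c3"
  have arc: "arc c3" and ab: "a \<in> path_image c1" "b \<in> path_image c1"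
    and ends: "pathstart c3 = a" "pathfinish c3 = b"
    using th by (auto simp: theta_curve_def)
  have "a \<noteq> b"
    using arc_distinct_ends[OF arc] ends by simp
  have split: "inside ?C13 \<union> inside ?C23 \<union> (path_image c3 - {a, b}) = inside ?C12"
    by (rule split_inside_simple_closed_curve[of c1 a b c2 c3])
      (use th in3 \<open>a \<noteq> b\<close> in \<open>auto simp: theta_curve_def arc_imp_simple_path\<close>)
  obtain m3 where m3: "m3 \<in> D3" "m3 \<in> path_image c3"
    using D3(3) by blast
  then have "m3 \<notin> {a, b}"
    using ab D3(4) by blast
  then have "m3 \<in> inside ?C12"
    using theta_curve_arc_inside[OF th in3] m3(2) by blast
  then have "x \<in> inside ?C12"
    using inside_if_connected_disjoint[OF D3(1,4) m3(1) D3(2)] by blast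
  then consider "x \<in> inside ?C13" | "x \<in> inside ?C23"
    using x split by blast
  \<comment> \<open>The curve from x to the arc not bounding this face cannot leave the face, which lies
    inside the cycle formed by c1 and c2 and hence misses that arc.\<close>
  then show False
  proof cases
    case 1
    obtain m2 where "m2 \<in> D2" "m2 \<in> path_image c2"
      using D2(3) by blast
    then show False
      using inside_if_connected_disjoint[OF D2(1,4,2)] 1 split
        inside_no_overlap[of ?C12] by blast
  next
    case 2
    obtain m1 where "m1 \<in> D1" "m1 \<in> path_image c1"
      using D1(3) by blast
    then show False
      using inside_if_connected_disjoint[OF D1(1,4,2)] 2 split
        inside_no_overlap[of ?C12] by blast
  qed
qed

lemma theta_curve_no_point_joined_to_all_arcs:
  assumes th: "theta_curve a b c1 c2 c3"
    and x: "x \<notin> path_image c1 \<union> path_image c2 \<union> path_image c3"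
    and D1: "connected D1" "x \<in> D1" "D1 \<inter> path_image c1 \<noteq> {}"
      "D1 \<inter> (path_image c2 \<union> path_image c3) = {}"
    and D2: "connected D2" "x \<in> D2" "D2 \<inter> path_image c2 \<noteq> {}"
      "D2 \<inter> (path_image c1 \<union> path_image c3) = {}"
    and D3: "connected D3" "x \<in> D3" "D3 \<inter> path_image c3 \<noteq> {}"
      "D3 \<inter> (path_image c1 \<union> path_image c2) = {}"
  shows False
  using theta_curve_arc_meets_inside[OF th]
proof (elim disjE)
  assume "path_image c3 \<inter> inside (path_image c1 \<union> path_image c2) \<noteq> {}"
  then show False
    by (rule theta_curve_no_point_joined_to_all_arcs_inside[OF th x D1 D2 D3])
next
  assume in2: "path_image c2 \<inter> inside (path_image c1 \<union> path_image c3) \<noteq> {}"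
  show False
    by (rule theta_curve_no_point_joined_to_all_arcs_inside[OF theta_curve_swap23[OF th] _
          D1(1-3) _ D3(1-3) _ D2(1-3) _ in2])
      (use x D1 D2 D3 in auto)
next
  assume in1: "path_image c1 \<inter> inside (path_image c2 \<union> path_image c3) \<noteq> {}"
  show False
    by (rule theta_curve_no_point_joined_to_all_arcs_inside
          [OF theta_curve_swap23[OF theta_curve_swap12[OF th]] _
          D2(1-3) _ D3(1-3) _ D1(1-3) _ in1])
      (use x D1 D2 D3 in auto)
qed

section \<open>Plane drawings contain no K_{3,3}\<close>

locale plane_drawing =
  fixes V :: "'a set" and E :: "'a set set"
    and p :: "'a \<Rightarrow> complex" and \<gamma> :: "'a set \<Rightarrow> real \<Rightarrow> complex"
  assumes simple: "simple_graph V E"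
    and inj_p: "inj_on p V"
    and edge_arc_drawn: "e \<in> E \<Longrightarrow> arc (\<gamma> e)"
    and edge_ends_drawn:
      "e \<in> E \<Longrightarrow> \<exists>u v. e = {u, v} \<and> pathstart (\<gamma> e) = p u \<and> pathfinish (\<gamma> e) = p v"
    and edge_avoids_vertices: "e \<in> E \<Longrightarrow> path_image (\<gamma> e) \<inter> p ` V \<subseteq> p ` e"
    and edge_images_meet: "e \<in> E \<Longrightarrow> f \<in> E \<Longrightarrow> e \<noteq> f \<Longrightarrow>
           path_image (\<gamma> e) \<inter> path_image (\<gamma> f) \<subseteq> p ` (e \<inter> f)"

lemma planar_graph_iff_plane_drawing: "planar_graph V E \<longleftrightarrow> (\<exists>p \<gamma>. plane_drawing V E p \<gamma>)"
  unfolding planar_graph_def plane_drawing_def Ball_def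
  by (simp add: imp_conjR all_conj_distrib conj_ac)

context plane_drawing
begin

abbreviation edge_image :: "'a set \<Rightarrow> complex set" where
  "edge_image e \<equiv> path_image (\<gamma> e)"

lemma edge_ends:
  assumes "{x, y} \<in> E"
  shows "x \<in> V" "y \<in> V" "x \<noteq> y"
proof -
  obtain u v where "u \<in> V" "v \<in> V" "u \<noteq> v" "{x, y} = {u, v}"
    using simple assms unfolding simple_graph_def by blast
  then show "x \<in> V" "y \<in> V" "x \<noteq> y"
    by (auto simp: doubleton_eq_iff)
qed

lemma edge_arc:
  assumes "{x, y} \<in> E"
  obtains g where "arc g" "pathstart g = p x" "pathfinish g = p y" "path_image g = edge_image {x, y}"
proof -
  obtain u v where uv: "{x, y} = {u, v}" "pathstart (\<gamma> {x, y}) = p u" "pathfinish (\<gamma> {x, y}) = p v"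
    using edge_ends_drawn[OF assms] by blast
  have arc: "arc (\<gamma> {x, y})"
    using edge_arc_drawn[OF assms] .
  have "u = x \<and> v = y \<or> u = y \<and> v = x"
    using uv(1) by (auto simp: doubleton_eq_iff)
  then consider "u = x" "v = y" | "u = y" "v = x"
    by blast
  then show thesis
  proof cases
    case 1
    then show thesis
      using that[of "\<gamma> {x, y}"] arc uv(2,3) by simp
  next
    case 2
    then show thesis
      using that[of "reversepath (\<gamma> {x, y})"] arc uv(2,3) by (simp add: arc_reversepath)
  qed
qed

lemma edge_ends_in_image:
  assumes "{x, y} \<in> E"
  shows "p x \<in> edge_image {x, y}" "p y \<in> edge_image {x, y}"
proof -
  obtain g where "pathstart g = p x" "pathfinish g = p y" "path_image g = edge_image {x, y}"
    by (rule edge_arc[OF assms])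
  then show "p x \<in> edge_image {x, y}" "p y \<in> edge_image {x, y}"
    by (metis pathstart_in_path_image pathfinish_in_path_image)+
qed

lemma connected_edge_image: "e \<in> E \<Longrightarrow> connected (edge_image e)"
  using edge_arc_drawn by (simp add: connected_path_image arc_imp_path)

lemma edge_subset_vertices:
  assumes "e \<in> E"
  shows "e \<subseteq> V"
proof -
  obtain u v where "u \<in> V" "v \<in> V" "e = {u, v}"
    using simple assms unfolding simple_graph_def by blast
  then show ?thesis
    by simp
qed

lemma vertex_in_edge_image:
  assumes "e \<in> E" "z \<in> V" "p z \<in> edge_image e"
  shows "z \<in> e"
proof -
  obtain w where w: "w \<in> e" "p z = p w"
    using edge_avoids_vertices[OF assms(1)] assms(2,3) by blast
  then have "z = w"
    using inj_onD[OF inj_p] edge_subset_vertices[OF assms(1)] assms(2) by blast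
  then show ?thesis
    using w(1) by simp
qed

lemma disjoint_edge_images:
  assumes "e \<in> E" "f \<in> E" "e \<inter> f = {}"
  shows "edge_image e \<inter> edge_image f = {}"
proof (cases "e = f")
  case True
  then have False
    using simple assms(1,3) unfolding simple_graph_def by blast
  then show ?thesis ..
next
  case False
  then show ?thesis
    using edge_images_meet[OF assms(1,2)] assms(3) by auto
qed

lemma two_edge_arc:
  assumes "{a, b} \<in> E" "{b, c} \<in> E" "a \<noteq> c"
  obtains g where "arc g" "pathstart g = p a" "pathfinish g = p c"
    "path_image g = edge_image {a, b} \<union> edge_image {b, c}"
proof -
  obtain g1 where g1: "arc g1" "pathstart g1 = p a" "pathfinish g1 = p b"
    "path_image g1 = edge_image {a, b}"
    by (rule edge_arc[OF assms(1)])
  obtain g2 where g2: "arc g2" "pathstart g2 = p b" "pathfinish g2 = p c"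
    "path_image g2 = edge_image {b, c}"
    by (rule edge_arc[OF assms(2)])
  have ne: "{a, b} \<noteq> {b, c}" and int: "{a, b} \<inter> {b, c} = {b}"
    using edge_ends(3)[OF assms(1)] edge_ends(3)[OF assms(2)] assms(3) by (auto simp: doubleton_eq_iff)
  have "path_image g1 \<inter> path_image g2 \<subseteq> {pathstart g2}"
    using edge_images_meet[OF assms(1,2) ne] g1 g2 unfolding int by simp
  then have "arc (g1 +++ g2)"
    using g1 g2 by (intro arc_join) auto
  then show thesis
    using that g1 g2 by (simp add: path_image_join)
qed

lemma two_edge_paths_meet:
  assumes "{a1, b} \<in> E" "{b, a2} \<in> E" "{a1, b'} \<in> E" "{b', a2} \<in> E"
    and "distinct [a1, a2, b, b']"
  shows "(edge_image {a1, b} \<union> edge_image {b, a2}) \<inter> (edge_image {a1, b'} \<union> edge_image {b', a2})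
    \<subseteq> {p a1, p a2}"
proof -
  have ne: "{a1, b} \<noteq> {a1, b'}" "{a1, b} \<noteq> {b', a2}" "{b, a2} \<noteq> {a1, b'}" "{b, a2} \<noteq> {b', a2}"
    and int: "{a1, b} \<inter> {a1, b'} = {a1}" "{a1, b} \<inter> {b', a2} = {}"
      "{b, a2} \<inter> {a1, b'} = {}" "{b, a2} \<inter> {b', a2} = {a2}"
    using assms(5) by (auto simp: doubleton_eq_iff)
  show ?thesis
    using edge_images_meet[OF assms(1,3) ne(1)] edge_images_meet[OF assms(1,4) ne(2)]
      edge_images_meet[OF assms(2,3) ne(3)] edge_images_meet[OF assms(2,4) ne(4)]
    unfolding int by blast
qed

lemma K23_theta_curve:
  assumes B: "B = {b1, b2, b3}" and dist: "distinct [a1, a2, b1, b2, b3]"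
    and E: "\<And>b. b \<in> B \<Longrightarrow> {a1, b} \<in> E" "\<And>b. b \<in> B \<Longrightarrow> {b, a2} \<in> E"
  obtains c where "theta_curve (p a1) (p a2) (c b1) (c b2) (c b3)"
    "\<forall>b\<in>B. path_image (c b) = edge_image {a1, b} \<union> edge_image {b, a2}"
proof -
  have "\<exists>g. arc g \<and> pathstart g = p a1 \<and> pathfinish g = p a2 \<and>
      path_image g = edge_image {a1, b} \<union> edge_image {b, a2}" if b: "b \<in> B" for b
  proof -
    obtain g where "arc g" "pathstart g = p a1" "pathfinish g = p a2"
      "path_image g = edge_image {a1, b} \<union> edge_image {b, a2}"
      by (rule two_edge_arc[OF E(1)[OF b] E(2)[OF b]]) (use dist in simp)
    then show ?thesis
      by blast
  qed
  then obtain c where c: "\<And>b. b \<in> B \<Longrightarrow> arc (c b) \<and> pathstart (c b) = p a1 \<and>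
      pathfinish (c b) = p a2 \<and> path_image (c b) = edge_image {a1, b} \<union> edge_image {b, a2}"
    by metis
  have meet: "path_image (c b) \<inter> path_image (c b') = {p a1, p a2}"
    if b: "b \<in> B" "b' \<in> B" "b \<noteq> b'" for b b'
  proof
    have "distinct [a1, a2, b, b']"
      using B dist b by auto
    then show "path_image (c b) \<inter> path_image (c b') \<subseteq> {p a1, p a2}"
      using two_edge_paths_meet[OF E(1)[OF b(1)] E(2)[OF b(1)] E(1)[OF b(2)] E(2)[OF b(2)]]
        c[OF b(1)] c[OF b(2)] by simp
    show "{p a1, p a2} \<subseteq> path_image (c b) \<inter> path_image (c b')"
      using c[OF b(1)] c[OF b(2)] pathstart_in_path_image[of "c b"] pathfinish_in_path_image[of "c b"]
        pathstart_in_path_image[of "c b'"] pathfinish_in_path_image[of "c b'"] by simp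
  qed
  have b: "b1 \<in> B" "b2 \<in> B" "b3 \<in> B" "b1 \<noteq> b2" "b1 \<noteq> b3" "b2 \<noteq> b3"
    using B dist by auto
  have "theta_curve (p a1) (p a2) (c b1) (c b2) (c b3)"
    using c[OF b(1)] c[OF b(2)] c[OF b(3)] meet[OF b(1,2,4)] meet[OF b(1,3,5)] meet[OF b(2,3,6)]
    by (simp add: theta_curve_def)
  then show thesis
    using that c by blast
qed

lemma no_K33:
  assumes A: "A = {a1, a2, a3}" and B: "B = {b1, b2, b3}"
    and dist: "distinct [a1, a2, a3, b1, b2, b3]"
    and E: "\<And>a b. a \<in> A \<Longrightarrow> b \<in> B \<Longrightarrow> {a, b} \<in> E"
  shows False
proof -
  have a: "a1 \<in> A" "a2 \<in> A" "a3 \<in> A"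
    using A by auto
  have E': "{b, a} \<in> E" if "a \<in> A" "b \<in> B" for a b
    using E[OF that] by (simp add: insert_commute)
  have "distinct [a1, a2, b1, b2, b3]"
    using dist by simp
  then obtain c where theta: "theta_curve (p a1) (p a2) (c b1) (c b2) (c b3)"
    and c: "\<forall>b\<in>B. path_image (c b) = edge_image {a1, b} \<union> edge_image {b, a2}"
    by (rule K23_theta_curve[OF B _ E[OF a(1)] E'[OF a(2)]])
  have "a3 \<in> V"
    using edge_ends(1)[OF E[OF a(3)]] B by blast
  then have off: "p a3 \<notin> path_image (c b)" if b: "b \<in> B" for b
    using c[rule_format, OF b] vertex_in_edge_image[OF E[OF a(1) b]]
      vertex_in_edge_image[OF E'[OF a(2) b]] A B dist b by auto
  have D: "connected (edge_image {a3, b})" "p a3 \<in> edge_image {a3, b}"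
    "edge_image {a3, b} \<inter> path_image (c b) \<noteq> {}" if b: "b \<in> B" for b
    using connected_edge_image[OF E[OF a(3) b]] edge_ends_in_image[OF E[OF a(3) b]]
      edge_ends_in_image(2)[OF E[OF a(1) b]] c[rule_format, OF b] by blast+
  have apart: "edge_image {a3, b} \<inter> path_image (c b') = {}"
    if b: "b \<in> B" "b' \<in> B" "b \<noteq> b'" for b b'
  proof -
    have "{a3, b} \<inter> {a1, b'} = {}" "{a3, b} \<inter> {b', a2} = {}"
      using A B dist b by auto
    then show ?thesis
      using disjoint_edge_images[OF E[OF a(3) b(1)] E[OF a(1) b(2)]]
        disjoint_edge_images[OF E[OF a(3) b(1)] E'[OF a(2) b(2)]] c[rule_format, OF b(2)] by auto
  qed
  have b: "b1 \<in> B" "b2 \<in> B" "b3 \<in> B" "b1 \<noteq> b2" "b1 \<noteq> b3" "b2 \<noteq> b3"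
    using B dist by auto
  then have "p a3 \<notin> path_image (c b1) \<union> path_image (c b2) \<union> path_image (c b3)"
    using off by blast
  then show False
    by (rule theta_curve_no_point_joined_to_all_arcs[OF theta _ D[OF b(1)] _ D[OF b(2)] _ D[OF b(3)]])
      (use apart b in \<open>simp_all add: Int_Un_distrib\<close>)
qed

lemma no_K33_subgraph: "\<not> K33_subgraph E A B"
proof
  assume "K33_subgraph E A B"
  then have "card A = 3" "card B = 3" and AB: "A \<inter> B = {}"
    and E: "\<And>a b. a \<in> A \<Longrightarrow> b \<in> B \<Longrightarrow> {a, b} \<in> E"
    unfolding K33_subgraph_def by auto
  then obtain a1 a2 a3 b1 b2 b3 where A: "A = {a1, a2, a3}" "a1 \<noteq> a2" "a2 \<noteq> a3" "a1 \<noteq> a3"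
    and B: "B = {b1, b2, b3}" "b1 \<noteq> b2" "b2 \<noteq> b3" "b1 \<noteq> b3"
    unfolding card_3_iff by blast
  have "distinct [a1, a2, a3, b1, b2, b3]"
    using A B AB by auto
  then show False
    using no_K33[OF A(1) B(1) _ E] by blast
qed

end

theorem theorem6:
  fixes V :: "'a set" and E :: "'a set set"
  assumes "planar_graph V E"
  shows "NCTD_pos ((closed_nbhd E) ` V) \<le> 7"
proof -
  obtain p \<gamma> where "plane_drawing V E p \<gamma>"
    using assms planar_graph_iff_plane_drawing by blast
  then have "\<not> K33_subgraph E A B" for A B
    by (rule plane_drawing.no_K33_subgraph)
  then show ?thesis
    by (rule NCTD_pos_closed_nbhds_le_7)
qed

end
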